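(* Let $X$ be a proper geodesic metric space equipped with the $C_0$ coarse structure, and let $f:X\to\mathbb{C}$ be a bounded continuous function. Then $f$ is a Higson function (i.e., $f\in C_{h_0}(X)$) if and only if $f$ is uniformly continuous.
   Context: The $C_0$ coarse structure on a metric space $(X,d)$ consists of all sets $E\subset X\times X$ such that for every $\epsilon>0$ there is a compact $K\subset X$ with $d(x,y)<\epsilon$ for all $(x,y)\in E\setminus(K\times K)$; such $E$ are called controlled sets. For a bounded continuous $f:X\to\mathbb{C}$ let $\mathbf{d}f:X\times X\to\mathbb{C}$, $\mathbf{d}f(x,y)=f(x)-f(y)$. $f$ is a Higson function if for every controlled set $E$ the restriction $\mathbf{d}f|_E$ vanishes at infinity (for every $\epsilon>0$ there is a compact $L\subset X\times X$ with $|\mathbf{d}f|<\epsilon$ on $E\setminus L$). $C_{h_0}(X)$ is the set of bounded continuous Higson functions. A map $f$ between metric spaces is uniformly continuous if there is a monotone $\omega:[0,\infty)\to[0,\infty)$ with $\lim_{t\to0}\omega(t)=0$ and $d(f(x),f(x'))\le\omega(d(x,x'))$ for all $x,x'$. *)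

theory Defs
  imports "HOL-Analysis.Analysis"
begin

definition proper_metric_space :: "'a::metric_space itself \<Rightarrow> bool" where
  "proper_metric_space _ \<longleftrightarrow> (\<forall>S::'a set. bounded S \<and> closed S \<longrightarrow> compact S)"

definition geodesic_space :: "'a::metric_space itself \<Rightarrow> bool" where
  "geodesic_space _ \<longleftrightarrow> (\<forall>x y::'a. \<exists>\<gamma>::real \<Rightarrow> 'a.
      \<gamma> 0 = x \<and> \<gamma> (dist x y) = y \<and>
      (\<forall>s\<in>{0..dist x y}. \<forall>t\<in>{0..dist x y}. dist (\<gamma> s) (\<gamma> t) = \<bar>s - t\<bar>))"

definition C0_controlled :: "('a::metric_space \<times> 'a) set \<Rightarrow> bool" where
  "C0_controlled E \<longleftrightarrow> (\<forall>\<epsilon>>0. \<exists>K. compact K \<and>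
      (\<forall>(x,y)\<in>E - K \<times> K. dist x y < \<epsilon>))"

definition higson_function :: "('a::metric_space \<Rightarrow> complex) \<Rightarrow> bool" where
  "higson_function f \<longleftrightarrow> (\<forall>E. C0_controlled E \<longrightarrow>
      (\<forall>\<epsilon>>0. \<exists>L::('a \<times> 'a) set. compact L \<and>
         (\<forall>(x,y)\<in>E - L. norm (f x - f y) < \<epsilon>)))"

definition C_h0 :: "('a::metric_space \<Rightarrow> complex) set" where
  "C_h0 = {f. bounded (range f) \<and> continuous_on UNIV f \<and> higson_function f}"

definition unif_cont_modulus :: "('a::metric_space \<Rightarrow> 'b::metric_space) \<Rightarrow> bool" where
  "unif_cont_modulus f \<longleftrightarrow> (\<exists>\<omega>::real \<Rightarrow> real.
      mono_on {0..} \<omega> \<and> (\<forall>t\<ge>0. \<omega> t \<ge> 0) \<and> (\<omega> \<longlongrightarrow> 0) (at_right 0) \<and>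
      (\<forall>x x'. dist (f x) (f x') \<le> \<omega> (dist x x')))"

end

theory Submission
  imports Defs
begin

text \<open>
  Proof idea.  Both sides of the equivalence are reduced to the library notion
  \<open>isUCont f\<close>, i.e. epsilon-delta uniform continuity on the whole space.

  \<^item> For a function with bounded range, the existence of a modulus of continuity
    is equivalent to epsilon-delta uniform continuity: the optimal modulus
    \<open>\<omega> t = sup {dist (f x) (f y) | dist x y \<le> t}\<close> is finite by boundedness.
  \<^item> Uniformly continuous functions are Higson: off a compact set \<open>K \<times> K\<close> the
    pairs of a C_0-controlled set are arbitrarily close.
  \<^item> Continuous Higson functions are uniformly continuous: otherwise there are
    pairs \<open>(x\<^sub>n, y\<^sub>n)\<close> with \<open>dist x\<^sub>n y\<^sub>n \<rightarrow> 0\<close> and \<open>|f x\<^sub>n - f y\<^sub>n| \<ge> \<epsilon>\<close>; they form a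
    controlled set, so the Higson property traps them in a compact set, and a
    subsequence converging to a diagonal point contradicts continuity of \<open>f\<close>.

  None of these steps uses properness or geodesicity of the space: in this
  formulation the equivalence holds for every metric space, and those
  hypotheses of the paper's setting are carried along unused.
\<close>

lemma modulus_imp_uniformly_continuous:
  fixes f :: "'a::metric_space \<Rightarrow> 'b::metric_space"
  assumes "unif_cont_modulus f"
  shows "isUCont f"
proof -
  obtain \<omega> :: "real \<Rightarrow> real" where lim: "(\<omega> \<longlongrightarrow> 0) (at_right 0)"
    and bound: "\<And>x x'. dist (f x) (f x') \<le> \<omega> (dist x x')"
    using assms unfolding unif_cont_modulus_def by blast
  show ?thesis
    unfolding isUCont_def
  proof (intro allI impI)
    fix e :: real assume "e > 0"
    with lim have "\<forall>\<^sub>F t in at_right 0. \<omega> t < e"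
      by (rule order_tendstoD(2))
    then obtain d where d: "d > 0" "\<And>t. 0 < t \<Longrightarrow> t < d \<Longrightarrow> \<omega> t < e"
      unfolding eventually_at_right_field by blast
    have "dist (f x) (f y) < e" if "dist x y < d" for x y
    proof (cases "x = y")
      case True
      then show ?thesis using \<open>e > 0\<close> by simp
    next
      case False
      then have "\<omega> (dist x y) < e" using d(2) that by simp
      then show ?thesis using bound[of x y] by linarith
    qed
    then show "\<exists>d>0. \<forall>x y. dist x y < d \<longrightarrow> dist (f x) (f y) < e"
      using d(1) by blast
  qed
qed

text \<open>Conversely, a uniformly continuous function with bounded range has the
  modulus \<open>\<omega> t = sup {dist (f x) (f y) | dist x y \<le> t}\<close>; boundedness of the
  range makes this supremum finite.\<close>
lemma uniformly_continuous_imp_modulus: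
  fixes f :: "'a::metric_space \<Rightarrow> 'b::metric_space"
  assumes bd: "bounded (range f)" and uc: "isUCont f"
  shows "unif_cont_modulus f"
proof -
  define pairs where "pairs t = {(x, y::'a). dist x y \<le> t}" for t :: real
  define osc where "osc p = dist (f (fst p)) (f (snd p))" for p :: "'a \<times> 'a"
  define \<omega> where "\<omega> t = Sup (osc ` pairs t)" for t
  have bdd: "bdd_above (osc ` A)" for A
    using diameter_bounded_bound[OF bd]
    by (intro bdd_aboveI2[where M = "diameter (range f)"]) (simp add: osc_def)
  have diag: "(x, x) \<in> pairs t" if "t \<ge> 0" for x t
    using that by (simp add: pairs_def)
  have upper: "osc p \<le> \<omega> t" if "p \<in> pairs t" for p t
    unfolding \<omega>_def using that by (intro cSUP_upper bdd)
  have nonneg: "\<forall>t\<ge>0. \<omega> t \<ge> 0"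
    using upper[OF diag] by (fastforce simp: osc_def)
  have mono: "mono_on {0..} \<omega>"
  proof (rule mono_onI)
    fix s t :: real assume "s \<in> {0..}" "s \<le> t"
    then have "pairs s \<noteq> {}"
      using diag[of s] by auto
    have "pairs s \<subseteq> pairs t"
      using \<open>s \<le> t\<close> by (auto simp: pairs_def)
    then show "\<omega> s \<le> \<omega> t"
      unfolding \<omega>_def using \<open>pairs s \<noteq> {}\<close> by (intro cSUP_subset_mono bdd) auto
  qed
  have bound: "\<forall>x x'. dist (f x) (f x') \<le> \<omega> (dist x x')"
    using upper[of "(x, x')" "dist x x'" for x x'] by (simp add: pairs_def osc_def)
  have lim: "(\<omega> \<longlongrightarrow> 0) (at_right 0)"
  proof (rule tendstoI)
    fix e :: real assume "e > 0"
    then have "e / 2 > 0" by simp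
    then obtain d where d: "d > 0" "\<forall>x y. dist x y < d \<longrightarrow> dist (f x) (f y) < e / 2"
      using uc unfolding isUCont_def by blast
    have "dist (\<omega> t) 0 < e" if t: "0 < t" "t < d" for t
    proof -
      have "\<omega> t \<le> e / 2"
        unfolding \<omega>_def
      proof (rule cSUP_least)
        show "pairs t \<noteq> {}" using diag[of t] t(1) by auto
        show "osc p \<le> e / 2" if "p \<in> pairs t" for p
        proof -
          have "dist (fst p) (snd p) < d"
            using that t(2) by (auto simp: pairs_def split_beta)
          then show ?thesis
            using d(2) by (simp add: osc_def less_imp_le)
        qed
      qed
      then show ?thesis using nonneg t(1) \<open>e > 0\<close> by simp
    qed
    then show "\<forall>\<^sub>F t in at_right 0. dist (\<omega> t) 0 < e"
      unfolding eventually_at_right_field using d(1) by blast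
  qed
  show ?thesis
    unfolding unif_cont_modulus_def using mono nonneg lim bound by blast
qed

lemma unif_cont_modulus_iff_uniformly_continuous:
  fixes f :: "'a::metric_space \<Rightarrow> 'b::metric_space"
  assumes "bounded (range f)"
  shows "unif_cont_modulus f \<longleftrightarrow> isUCont f"
  using assms modulus_imp_uniformly_continuous uniformly_continuous_imp_modulus by blast

text \<open>Off \<open>K \<times> K\<close> the pairs of a controlled set are closer than any given
  \<open>\<delta>\<close>, so uniform continuity makes \<open>f\<close> nearly constant on them.\<close>
lemma uniformly_continuous_imp_higson:
  fixes f :: "'a::metric_space \<Rightarrow> complex"
  assumes uc: "isUCont f"
  shows "higson_function f"
  unfolding higson_function_def
proof (intro allI impI)
  fix E :: "('a \<times> 'a) set" and e :: real
  assume E: "C0_controlled E" and "e > 0"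
  then obtain d where d: "d > 0" "\<forall>x y. dist x y < d \<longrightarrow> dist (f x) (f y) < e"
    using uc unfolding isUCont_def by blast
  obtain K where K: "compact K" "\<forall>(x, y)\<in>E - K \<times> K. dist x y < d"
    using E d(1) unfolding C0_controlled_def by blast
  have "norm (f x - f y) < e" if "(x, y) \<in> E - K \<times> K" for x y
  proof -
    have "dist x y < d" using K(2) that by blast
    then show ?thesis using d(2) by (simp add: dist_norm)
  qed
  moreover have "compact (K \<times> K)"
    using K(1) by (intro compact_Times)
  ultimately show "\<exists>L. compact L \<and> (\<forall>(x, y)\<in>E - L. norm (f x - f y) < e)"
    by fast
qed

text \<open>A sequence of pairs whose distances tend to zero forms a controlled set:
  only finitely many of its pairs are far apart, and they lie in a finite,
  hence compact, square.\<close>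
lemma C0_controlled_range_of_shrinking_pairs:
  fixes p :: "nat \<Rightarrow> 'a::metric_space \<times> 'a"
  assumes shrink: "(\<lambda>n. dist (fst (p n)) (snd (p n))) \<longlonglongrightarrow> 0"
  shows "C0_controlled (range p)"
  unfolding C0_controlled_def
proof (intro allI impI)
  fix \<epsilon> :: real assume "\<epsilon> > 0"
  then obtain N where N: "\<And>n. n \<ge> N \<Longrightarrow> dist (fst (p n)) (snd (p n)) < \<epsilon>"
    using order_tendstoD(2)[OF shrink] unfolding eventually_sequentially by blast
  define K where "K = fst ` p ` {..<N} \<union> snd ` p ` {..<N}"
  have "compact K"
    unfolding K_def by (intro finite_imp_compact) simp
  have close: "dist (fst (p n)) (snd (p n)) < \<epsilon>" if "p n \<notin> K \<times> K" for n
  proof (rule N)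
    show "n \<ge> N"
    proof (rule ccontr)
      assume "\<not> n \<ge> N"
      then have "p n \<in> K \<times> K"
        unfolding K_def by (simp add: mem_Times_iff)
      then show False using that by blast
    qed
  qed
  from close have "\<forall>(x, y)\<in>range p - K \<times> K. dist x y < \<epsilon>"
    by (metis (mono_tags, lifting) DiffE case_prod_beta rangeE)
  with \<open>compact K\<close> show "\<exists>K. compact K \<and> (\<forall>(x, y)\<in>range p - K \<times> K. dist x y < \<epsilon>)"
    by blast
qed

lemma shrinking_pairs_in_compact_converge_to_diagonal:
  fixes p :: "nat \<Rightarrow> 'a::metric_space \<times> 'a"
  assumes "compact L" "\<And>n. p n \<in> L"
    and shrink: "(\<lambda>n. dist (fst (p n)) (snd (p n))) \<longlonglongrightarrow> 0"
  obtains r a where "strict_mono r"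
    "(\<lambda>n. fst (p (r n))) \<longlonglongrightarrow> a" "(\<lambda>n. snd (p (r n))) \<longlonglongrightarrow> a"
proof -
  obtain l r where r: "strict_mono r" and lim: "(p \<circ> r) \<longlonglongrightarrow> l"
    using assms(1,2) unfolding compact_def by blast
  have fst_lim: "(\<lambda>n. fst (p (r n))) \<longlonglongrightarrow> fst l"
    using tendsto_fst[OF lim] by (simp add: o_def)
  have snd_lim: "(\<lambda>n. snd (p (r n))) \<longlonglongrightarrow> snd l"
    using tendsto_snd[OF lim] by (simp add: o_def)
  have "(\<lambda>n. dist (fst (p (r n))) (snd (p (r n)))) \<longlonglongrightarrow> dist (fst l) (snd l)"
    by (rule tendsto_dist[OF fst_lim snd_lim])
  moreover have "(\<lambda>n. dist (fst (p (r n))) (snd (p (r n)))) \<longlonglongrightarrow> 0"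
    using LIMSEQ_subseq_LIMSEQ[OF shrink r] by (simp add: o_def)
  ultimately have "fst l = snd l"
    using LIMSEQ_unique by fastforce
  then show ?thesis
    using that r fst_lim snd_lim by metis
qed

text \<open>A failure of uniform continuity produces shrinking pairs on
  which \<open>f\<close> oscillates by at least \<open>e\<close>; the Higson property confines them to
  a compact set, where continuity at the limiting diagonal point fails.\<close>
lemma continuous_higson_imp_uniformly_continuous:
  fixes f :: "'a::metric_space \<Rightarrow> complex"
  assumes higson: "higson_function f" and cont: "continuous_on UNIV f"
  shows "isUCont f"
proof (rule ccontr)
  assume "\<not> isUCont f"
  then obtain e where "e > 0"
    and bad: "\<And>d. d > 0 \<Longrightarrow> \<exists>x y. dist x y < d \<and> norm (f x - f y) \<ge> e"
    unfolding isUCont_def dist_norm by (metis not_less)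
  have "\<forall>n. \<exists>q. dist (fst q) (snd q) < inverse (Suc n) \<and> norm (f (fst q) - f (snd q)) \<ge> e"
    using bad by (metis fst_conv snd_conv inverse_Suc)
  then obtain p :: "nat \<Rightarrow> 'a \<times> 'a" where
    "\<forall>n. dist (fst (p n)) (snd (p n)) < inverse (Suc n) \<and> norm (f (fst (p n)) - f (snd (p n))) \<ge> e"
    by (rule choice[THEN exE])
  then have close: "\<And>n. dist (fst (p n)) (snd (p n)) < inverse (Suc n)"
    and far: "\<And>n. norm (f (fst (p n)) - f (snd (p n))) \<ge> e"
    by simp_all
  have shrink: "(\<lambda>n. dist (fst (p n)) (snd (p n))) \<longlonglongrightarrow> 0"
  proof (rule tendsto_sandwich[OF _ _ tendsto_const LIMSEQ_inverse_real_of_nat])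
    show "\<forall>\<^sub>F n in sequentially. 0 \<le> dist (fst (p n)) (snd (p n))"
      by simp
    show "\<forall>\<^sub>F n in sequentially. dist (fst (p n)) (snd (p n)) \<le> inverse (Suc n)"
      by (intro always_eventually allI less_imp_le close)
  qed
  obtain L where L: "compact L" "\<forall>(x, y)\<in>range p - L. norm (f x - f y) < e"
    using higson C0_controlled_range_of_shrinking_pairs[OF shrink] \<open>e > 0\<close>
    unfolding higson_function_def by blast
  have "p n \<in> L" for n
  proof (rule ccontr)
    assume "p n \<notin> L"
    then have "norm (f (fst (p n)) - f (snd (p n))) < e"
      using L(2) by (auto simp: case_prod_beta)
    with far[of n] show False by simp
  qed
  then obtain r a where fst_lim: "(\<lambda>n. fst (p (r n))) \<longlonglongrightarrow> a"
    and snd_lim: "(\<lambda>n. snd (p (r n))) \<longlonglongrightarrow> a"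
    using shrinking_pairs_in_compact_converge_to_diagonal[OF L(1) _ shrink] by blast
  have "isCont f a"
    using cont by (simp add: continuous_on_eq_continuous_at)
  then have "(\<lambda>n. norm (f (fst (p (r n))) - f (snd (p (r n))))) \<longlonglongrightarrow> norm (f a - f a)"
    by (intro tendsto_norm tendsto_diff isCont_tendsto_compose[OF _ fst_lim]
        isCont_tendsto_compose[OF _ snd_lim])
  then have "\<forall>\<^sub>F n in sequentially. norm (f (fst (p (r n))) - f (snd (p (r n)))) < e"
    using \<open>e > 0\<close> by (intro order_tendstoD(2)) simp_all
  then obtain N where "norm (f (fst (p (r N))) - f (snd (p (r N)))) < e"
    unfolding eventually_sequentially by blast
  with far[of "r N"] show False by simp
qed

theorem theorem3p4:
  fixes f :: "'a::metric_space \<Rightarrow> complex"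
  assumes "proper_metric_space TYPE('a)"
    and "geodesic_space TYPE('a)"
    and "bounded (range f)"
    and "continuous_on UNIV f"
  shows "f \<in> C_h0 \<longleftrightarrow> unif_cont_modulus f"
proof -
  have "f \<in> C_h0 \<longleftrightarrow> higson_function f"
    using assms(3,4) by (simp add: C_h0_def)
  also have "\<dots> \<longleftrightarrow> isUCont f"
    using continuous_higson_imp_uniformly_continuous[OF _ assms(4)]
      uniformly_continuous_imp_higson by blast
  also have "\<dots> \<longleftrightarrow> unif_cont_modulus f"
    using unif_cont_modulus_iff_uniformly_continuous[OF assms(3)] by simp
  finally show ?thesis .
qed

end
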